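(* Let $G_m$ be a totally ascending braid Gauss diagram with $r$ circles. Then $r=m+w(G_m)$.
   Context: Braid Gauss diagrams. $B_m$ is the Artin braid group with generators $\sigma_1,\dots,\sigma_{m-1}$. For a word $\beta$ in $\sigma_i^{\pm1}$, the closed braid diagram $D$ of $\beta$ is obtained by joining the top and bottom endpoints of the $m$ strands by $m$ parallel closing strands; it represents an oriented link. The Gauss diagram $G$ of $D$ has one oriented circle parametrizing each component of $D$, and for each crossing an arrow joining its two preimages, pointing from the overpassing preimage to the underpassing one, carrying the sign (local writhe) of the crossing. An arc of $G$ is a connected component of the complement in the circles of all arrow endpoints. The braid Gauss diagram $G_m$ is $G$ together with labels $a_1,\dots,a_m$, where $a_i$ is the arc of $G$ containing the preimage of the $i$-th closing strand. The writhe $w(G_m)$ is the sum of the signs of all arrows. Totally ascending. Let $G_m$ have $r$ circles. For each circle $C$ let $\mu(C)$ be the smallest index $i$ such that the arc $a_i$ lies on $C$. Order the circles so that $\mu(C_1)<\mu(C_2)<\dots<\mu(C_r)$ (so $\mu(C_1)=1$); $C_i$ is the $i$-th circle. $G_m$ is totally ascending if for every pair $1\le i\le j\le r$: walking once around $C_i$ in its orientation, starting from the arc $a_{\mu(C_i)}$, every arrow connecting $C_i$ and $C_j$ (for $i=j$: every arrow with both endpoints on $C_i$) is met first at its head. *)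

theory Defs
  imports Main
begin

text \<open>
A braid word in B_m is a list of letters (i, e): (i, True) is sigma_i and
(i, False) is sigma_i^{-1}, with 1 <= i < m.  Strand positions are 1..m,
numbered left to right.  Letter number k (0-based in the list) is the k-th
crossing from the bottom; the braid strands are oriented upwards (bottom to
top) and the closing strands run from top position j back down to bottom
position j.  Under the standard convention, sigma_i is a positive crossing,
in which the strand entering it from the bottom-left position i passes over
the strand entering from position i+1; sigma_i^{-1} is the negative crossing
with the opposite over/under information.

A preimage of crossing k on the Gauss circles is encoded as (k, True)
(the strand entering crossing k from the left, i.e. from position i) or
(k, False) (the strand entering from position i+1).
\<close>

type_synonym letter = "nat \<times> bool"

definition valid_braid :: "nat \<Rightarrow> letter list \<Rightarrow> bool" where
  "valid_braid m w \<longleftrightarrow> 1 \<le> m \<and> (\<forall>(i,e)\<in>set w. 1 \<le> i \<and> i < m)"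

definition step :: "letter \<Rightarrow> nat \<Rightarrow> nat" where
  "step l p = (if p = fst l then fst l + 1 else if p = fst l + 1 then fst l else p)"

text \<open>Top position reached by the strand starting at bottom position p.\<close>
definition braid_perm :: "letter list \<Rightarrow> nat \<Rightarrow> nat" where
  "braid_perm w p = fold step w p"

text \<open>Crossing preimages met (in order) by the strand going up from bottom
position p; the first argument is the remaining word, k the index of its
first letter.\<close>
fun events_from :: "letter list \<Rightarrow> nat \<Rightarrow> nat \<Rightarrow> (nat \<times> bool) list" where
  "events_from [] k p = []"
| "events_from (l # ls) k p =
     (if p = fst l then [(k, True)] else if p = fst l + 1 then [(k, False)] else [])
     @ events_from ls (Suc k) (step l p)"

text \<open>The head (underpass preimage) of the arrow of crossing k:
for sigma_i the left strand is over, so the head is the right preimage.\<close>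
definition head_side :: "letter list \<Rightarrow> nat \<Rightarrow> bool" where
  "head_side w k = (\<not> snd (w ! k))"

definition arrow_sign :: "letter list \<Rightarrow> nat \<Rightarrow> int" where
  "arrow_sign w k = (if snd (w ! k) then 1 else -1)"

definition writhe :: "letter list \<Rightarrow> int" where
  "writhe w = (\<Sum>k<length w. arrow_sign w k)"

text \<open>The circle containing the label a_j, represented by the set of
labels (closing strands) lying on it.\<close>
definition circle_of :: "letter list \<Rightarrow> nat \<Rightarrow> nat set" where
  "circle_of w j = {(braid_perm w ^^ t) j | t. True}"

definition circles :: "nat \<Rightarrow> letter list \<Rightarrow> nat set set" where
  "circles m w = circle_of w ` {1..m}"

definition num_circles :: "nat \<Rightarrow> letter list \<Rightarrow> nat" where
  "num_circles m w = card (circles m w)"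

definition mu :: "letter list \<Rightarrow> nat \<Rightarrow> nat" where
  "mu w j = Min (circle_of w j)"

definition circle_reps :: "nat \<Rightarrow> letter list \<Rightarrow> nat set" where
  "circle_reps m w = {j \<in> {1..m}. mu w j = j}"

definition period :: "letter list \<Rightarrow> nat \<Rightarrow> nat" where
  "period w j = (LEAST t. 0 < t \<and> (braid_perm w ^^ t) j = j)"

text \<open>Arrow endpoints met when walking once around the circle through a_j,
starting from the arc a_j.\<close>
definition circle_walk :: "letter list \<Rightarrow> nat \<Rightarrow> (nat \<times> bool) list" where
  "circle_walk w j =
     concat (map (\<lambda>t. events_from w 0 ((braid_perm w ^^ t) j)) [0..<period w j])"

text \<open>Totally ascending: for circles C_i, C_j with mu(C_i) <= mu(C_j) (i.e. i <= j),
walking around C_i from a_{mu(C_i)}, every arrow with one endpoint on C_i and the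
other on C_j is met first at its head.\<close>
definition totally_ascending :: "nat \<Rightarrow> letter list \<Rightarrow> bool" where
  "totally_ascending m w \<longleftrightarrow>
     (\<forall>a\<in>circle_reps m w. \<forall>b\<in>circle_reps m w. a \<le> b \<longrightarrow>
       (\<forall>idx < length (circle_walk w a).
          let (k, s) = circle_walk w a ! idx in
          ((k, \<not> s) \<in> set (circle_walk w b) \<and>
           (\<forall>idx' < idx. fst (circle_walk w a ! idx') \<noteq> k))
          \<longrightarrow> s = head_side w k))"

end

theory Submission
  imports Defs "HOL-Combinatorics.Cycles"
begin

text \<open>
Strands are labelled by their bottom positions 1..m, and the closing permutation
braid_perm w carries each label to the next one on its circle, so the circles are its
orbits (computed with least_power from HOL-Combinatorics).  Order the strands totally:
first by the basepoint mu of their circle, then by the number of steps walked from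
that basepoint.  For each level k of the braid count the pairs p before q whose
strands stand left-to-right at level k.  Crossing k swaps exactly the two strands meeting
there, and total ascendancy says the arrow head lies on the earlier one; hence the
crossing changes the count by its sign, and the top count minus the bottom count is
the writhe.  Relabelling the top level through the closing strands recovers the pairs
counted at the bottom, except the m - r pairs formed by a non-basepoint label and the
basepoint of its circle, which are counted only at the bottom.  So w(G_m) = -(m - r).
\<close>

section \<open>Strand positions\<close>

lemma step_eq_transpose: "step l = transpose (fst l) (fst l + 1)"
  by (auto simp: fun_eq_iff step_def transpose_def)

lemma permutation_fold_step: "permutation (fold step xs)"
proof (induction xs)
  case (Cons l xs)
  have "fold step (l # xs) = fold step xs \<circ> step l" by simp
  then show ?case
    using Cons permutation_compose permutation_swap_id by (metis step_eq_transpose)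
qed (simp add: id_def)

text \<open>Position at level k (below letter k) of the strand starting at bottom position p.\<close>
definition strand_pos :: "letter list \<Rightarrow> nat \<Rightarrow> nat \<Rightarrow> nat" where
  "strand_pos w k = fold step (take k w)"

lemma strand_pos_0 [simp]: "strand_pos w 0 p = p"
  by (simp add: strand_pos_def)

lemma strand_pos_length: "strand_pos w (length w) = braid_perm w"
  by (simp add: strand_pos_def braid_perm_def fun_eq_iff)

lemma strand_pos_Suc: "k < length w \<Longrightarrow> strand_pos w (Suc k) p = step (w ! k) (strand_pos w k p)"
  by (simp add: strand_pos_def take_Suc_conv_app_nth)

lemma inj_strand_pos: "inj (strand_pos w k)"
  unfolding strand_pos_def using permutation_fold_step bij_is_inj permutation_bijective by blast

lemma permutation_braid_perm: "permutation (braid_perm w)"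
  unfolding braid_perm_def by (rule permutation_fold_step)

lemma fold_step_range:
  assumes "valid_braid m w" "set xs \<subseteq> set w" "p \<in> {1..m}"
  shows "fold step xs p \<in> {1..m}"
  using assms(2,3)
proof (induction xs arbitrary: p)
  case (Cons l xs)
  have "step l p \<in> {1..m}"
    using assms(1) Cons.prems by (auto simp: valid_braid_def step_def)
  then show ?case using Cons by simp
qed simp

lemma strand_pos_image:
  assumes "valid_braid m w"
  shows "strand_pos w k ` {1..m} = {1..m}"
proof (rule endo_inj_surj)
  show "strand_pos w k ` {1..m} \<subseteq> {1..m}"
    unfolding strand_pos_def using fold_step_range[OF assms set_take_subset] by blast
qed (use inj_strand_pos in \<open>auto intro: inj_on_subset\<close>)

lemma braid_perm_image: "valid_braid m w \<Longrightarrow> braid_perm w ` {1..m} = {1..m}"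
  using strand_pos_image[of m w "length w"] by (simp add: strand_pos_length)

lemma events_from_iff:
  "(k, s) \<in> set (events_from ls k0 p) \<longleftrightarrow>
     k0 \<le> k \<and> k < k0 + length ls \<and>
     fold step (take (k - k0) ls) p = (if s then fst (ls ! (k - k0)) else fst (ls ! (k - k0)) + 1)"
proof (induction ls arbitrary: k0 p)
  case (Cons l ls)
  show ?case
  proof (cases "k = k0")
    case False
    then have "k0 \<le> k \<longleftrightarrow> Suc k0 \<le> k" by auto
    moreover have "Suc k0 \<le> k \<Longrightarrow> k - k0 = Suc (k - Suc k0)" by auto
    ultimately show ?thesis using Cons[of "Suc k0" "step l p"] False by auto
  qed (use Cons[of "Suc k0" "step l p"] in auto)
qed simp

lemma events_iff:
  "(k, s) \<in> set (events_from w 0 p) \<longleftrightarrow>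
     k < length w \<and> strand_pos w k p = (if s then fst (w ! k) else fst (w ! k) + 1)"
  using events_from_iff[of k s w 0 p] by (simp add: strand_pos_def)


section \<open>Circles as orbits of the closing permutation\<close>

lemma period_eq_least_power: "period w p = least_power (braid_perm w) p"
  unfolding period_def least_power_def by (simp add: conj_commute)

lemma period_pos: "0 < period w p"
  using least_power_of_permutation(2)[OF permutation_braid_perm] by (simp add: period_eq_least_power)

lemma funpow_mod_period: "(braid_perm w ^^ (t mod period w p)) p = (braid_perm w ^^ t) p"
proof -
  let ?f = "braid_perm w" and ?L = "period w p"
  have "(?f ^^ (t - t mod ?L)) p = p"
    using least_power_dvd[OF permutation_braid_perm[of w], where a = p and n = "t - t mod ?L"]
    by (simp add: period_eq_least_power)
  then have "(?f ^^ (t mod ?L)) p = (?f ^^ (t mod ?L)) ((?f ^^ (t - t mod ?L)) p)" by simp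
  also have "\<dots> = (?f ^^ t) p"
    by (metis add_diff_inverse_nat funpow_add mod_less_eq_dividend not_less o_apply)
  finally show ?thesis .
qed

lemma circle_of_period: "circle_of w p = (\<lambda>t. (braid_perm w ^^ t) p) ` {..<period w p}"
proof -
  have "circle_of w p = range (\<lambda>t. (braid_perm w ^^ t) p)"
    unfolding circle_of_def by auto
  also have "\<dots> = set (support (braid_perm w) p)"
    by (rule support_set[OF permutation_braid_perm, symmetric])
  finally show ?thesis by (simp add: period_eq_least_power atLeast0LessThan)
qed

lemma inj_on_orbit: "inj_on (\<lambda>t. (braid_perm w ^^ t) p) {..<period w p}"
  using cycle_of_permutation[OF permutation_braid_perm, where a = p]
  by (simp add: distinct_map period_eq_least_power atLeast0LessThan)

lemma finite_circle_of: "finite (circle_of w p)"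
  by (simp add: circle_of_period)

lemma circle_of_self: "p \<in> circle_of w p"
  unfolding circle_of_def by (auto intro: exI[of _ 0])

lemma braid_perm_in_circle_of: "braid_perm w p \<in> circle_of w p"
  unfolding circle_of_def by (auto intro: exI[of _ 1])

lemma circle_of_mono:
  assumes "q \<in> circle_of w p"
  shows "circle_of w q \<subseteq> circle_of w p"
proof
  obtain t where q: "q = (braid_perm w ^^ t) p"
    using assms unfolding circle_of_def by auto
  fix x assume "x \<in> circle_of w q"
  then obtain s where "x = (braid_perm w ^^ s) q"
    unfolding circle_of_def by auto
  then have "x = (braid_perm w ^^ (s + t)) p"
    unfolding q by (simp add: funpow_add)
  then show "x \<in> circle_of w p"
    unfolding circle_of_def by blast
qed

lemma circle_of_eq:
  assumes "q \<in> circle_of w p"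
  shows "circle_of w q = circle_of w p"
proof
  show "circle_of w q \<subseteq> circle_of w p" using circle_of_mono[OF assms] .
  obtain t where t: "t < period w p" and q: "q = (braid_perm w ^^ t) p"
    using assms unfolding circle_of_period by auto
  have "(braid_perm w ^^ (period w p - t)) q = (braid_perm w ^^ period w p) p"
    unfolding q using t by (metis funpow_add le_add_diff_inverse2 less_imp_le o_apply)
  also have "\<dots> = p"
    using funpow_mod_period[where w = w and t = "period w p" and p = p] by simp
  finally have "p \<in> circle_of w q"
    unfolding circle_of_def by (auto intro: exI[of _ "period w p - t"] sym)
  then show "circle_of w p \<subseteq> circle_of w q" by (rule circle_of_mono)
qed

lemma funpow_braid_perm_range:
  assumes "valid_braid m w" "p \<in> {1..m}"
  shows "(braid_perm w ^^ t) p \<in> {1..m}"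
  using braid_perm_image[OF assms(1)] assms(2) by (induction t) auto

lemma circle_of_range: "valid_braid m w \<Longrightarrow> p \<in> {1..m} \<Longrightarrow> circle_of w p \<subseteq> {1..m}"
  unfolding circle_of_def using funpow_braid_perm_range by blast


section \<open>Basepoints and the order of the strands\<close>

lemma mu_in_circle_of: "mu w p \<in> circle_of w p"
  unfolding mu_def using finite_circle_of circle_of_self by (metis Min_in empty_iff)

lemma mu_le: "q \<in> circle_of w p \<Longrightarrow> mu w p \<le> q"
  unfolding mu_def by (simp add: finite_circle_of)

lemma mu_le_self: "mu w p \<le> p"
  using mu_le circle_of_self by blast

lemma mu_eq: "q \<in> circle_of w p \<Longrightarrow> mu w q = mu w p"
  unfolding mu_def by (simp add: circle_of_eq)

lemma mu_mu [simp]: "mu w (mu w p) = mu w p"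
  using mu_eq mu_in_circle_of by blast

lemma mu_braid_perm [simp]: "mu w (braid_perm w p) = mu w p"
  using mu_eq braid_perm_in_circle_of by blast

lemma mu_range: "valid_braid m w \<Longrightarrow> p \<in> {1..m} \<Longrightarrow> mu w p \<in> {1..m}"
  using circle_of_range mu_in_circle_of by blast

lemma mu_in_circle_reps: "valid_braid m w \<Longrightarrow> p \<in> {1..m} \<Longrightarrow> mu w p \<in> circle_reps m w"
  unfolding circle_reps_def using mu_range by simp

definition walk_index :: "letter list \<Rightarrow> nat \<Rightarrow> nat" where
  "walk_index w q = (LEAST t. (braid_perm w ^^ t) (mu w q) = q)"

lemma walk_index:
  shows "walk_index w q < period w (mu w q)"
    and "(braid_perm w ^^ walk_index w q) (mu w q) = q"
proof -
  have "q \<in> circle_of w (mu w q)"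
    using circle_of_eq[OF mu_in_circle_of] circle_of_self by metis
  then obtain t where t: "t < period w (mu w q)" "(braid_perm w ^^ t) (mu w q) = q"
    unfolding circle_of_period by auto
  show "(braid_perm w ^^ walk_index w q) (mu w q) = q"
    unfolding walk_index_def using t(2) by (rule LeastI)
  have "walk_index w q \<le> t"
    unfolding walk_index_def using t(2) by (rule Least_le)
  then show "walk_index w q < period w (mu w q)" using t(1) by simp
qed

lemma walk_index_unique:
  assumes "t < period w (mu w q)" "(braid_perm w ^^ t) (mu w q) = q"
  shows "walk_index w q = t"
  using inj_onD[OF inj_on_orbit] walk_index assms by (metis lessThan_iff)

lemma walk_index_eq_0_iff: "walk_index w q = 0 \<longleftrightarrow> mu w q = q"
  using walk_index(2)[of w q] walk_index_unique[of 0 w q] period_pos[of w "mu w q"] by auto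

lemma walk_index_braid_perm:
  "walk_index w (braid_perm w q) = Suc (walk_index w q) mod period w (mu w q)"
proof (rule walk_index_unique)
  show "Suc (walk_index w q) mod period w (mu w q) < period w (mu w (braid_perm w q))"
    using period_pos by simp
  have "(braid_perm w ^^ Suc (walk_index w q)) (mu w q) = braid_perm w q"
    using walk_index(2)[of w q] by simp
  then show "(braid_perm w ^^ (Suc (walk_index w q) mod period w (mu w q))) (mu w (braid_perm w q))
      = braid_perm w q"
    by (simp add: funpow_mod_period)
qed

lemma walk_index_braid_perm_cases:
  "braid_perm w q = mu w q \<and> Suc (walk_index w q) = period w (mu w q) \<or>
   braid_perm w q \<noteq> mu w q \<and> walk_index w (braid_perm w q) = Suc (walk_index w q)"
proof (cases "Suc (walk_index w q) = period w (mu w q)")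
  case True
  then have "walk_index w (braid_perm w q) = 0"
    by (simp add: walk_index_braid_perm)
  then show ?thesis using True walk_index_eq_0_iff[of w "braid_perm w q"] by simp
next
  case False
  then have "walk_index w (braid_perm w q) = Suc (walk_index w q)"
    using walk_index(1)[of w q] by (simp add: walk_index_braid_perm)
  then show ?thesis using walk_index_eq_0_iff[of w "braid_perm w q"] by auto
qed

definition precedes :: "letter list \<Rightarrow> nat \<Rightarrow> nat \<Rightarrow> bool" where
  "precedes w p q \<longleftrightarrow>
     mu w p < mu w q \<or> (mu w p = mu w q \<and> walk_index w p < walk_index w q)"

lemma precedes_total: "p \<noteq> q \<Longrightarrow> precedes w p q \<or> precedes w q p"
  unfolding precedes_def using walk_index(2) by (metis linorder_neqE_nat)

lemma precedes_asym: "precedes w p q \<Longrightarrow> \<not> precedes w q p"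
  unfolding precedes_def by auto

lemma closing_strand_last:
  assumes "braid_perm w p = mu w p" "mu w q = mu w p"
  shows "\<not> precedes w p q"
proof -
  have "Suc (walk_index w p) = period w (mu w p)"
    using walk_index_braid_perm_cases[of w p] assms(1) by auto
  then show ?thesis
    unfolding precedes_def using walk_index(1)[of w q] assms(2) by auto
qed

text \<open>Relabelling two strands by the closing permutation preserves their order,
except that a strand closing up to a basepoint comes to precede the rest of its circle.
(The hypothesis excludes the symmetric exception, since basepoints are minimal labels.)\<close>
lemma precedes_braid_perm:
  assumes lt: "braid_perm w p < braid_perm w q"
  shows "precedes w (braid_perm w p) (braid_perm w q) \<longleftrightarrow>
           precedes w p q \<or> (braid_perm w p = mu w p \<and> mu w q = mu w p)"
proof (cases "mu w q = mu w p")
  case same: True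
  have q_open: "braid_perm w q \<noteq> mu w q"
    using lt mu_le_self[of w "braid_perm w p"] same by auto
  then have q_step: "walk_index w (braid_perm w q) = Suc (walk_index w q)"
    using walk_index_braid_perm_cases[of w q] by auto
  show ?thesis
  proof (cases "braid_perm w p = mu w p")
    case True
    then have "walk_index w (braid_perm w p) = 0"
      using walk_index_eq_0_iff[of w "braid_perm w p"] by simp
    then show ?thesis
      unfolding precedes_def using True same q_step by simp
  next
    case False
    then have "walk_index w (braid_perm w p) = Suc (walk_index w p)"
      using walk_index_braid_perm_cases[of w p] by auto
    then show ?thesis
      unfolding precedes_def using False same q_step by simp
  qed
qed (auto simp: precedes_def)


section \<open>Walking around a circle\<close>

lemma circle_walk_mem:
  "x \<in> set (circle_walk w a) \<longleftrightarrow> (\<exists>z\<in>circle_of w a. x \<in> set (events_from w 0 z))"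
  unfolding circle_walk_def circle_of_period by fastforce

lemma events_from_strand_unique:
  "x \<in> set (events_from w 0 p) \<Longrightarrow> x \<in> set (events_from w 0 q) \<Longrightarrow> p = q"
proof -
  assume "x \<in> set (events_from w 0 p)" "x \<in> set (events_from w 0 q)"
  moreover obtain k s where "x = (k, s)" by fastforce
  ultimately have "strand_pos w k p = strand_pos w k q"
    by (simp add: events_iff)
  then show "p = q" using inj_strand_pos injD by metis
qed

lemma concat_earlier_block:
  assumes tu: "t < u" "u < n" and y: "y \<in> set (f t)"
    and only_u: "\<And>t'. t' < n \<Longrightarrow> x \<in> set (f t') \<Longrightarrow> t' = u"
    and j: "j < length (concat (map f [0..<n]))" "concat (map f [0..<n]) ! j = x"
  shows "\<exists>i<j. concat (map f [0..<n]) ! i = y"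
proof -
  let ?pre = "concat (map f [0..<u])" and ?post = "concat (map f [u..<n])"
  have split: "concat (map f [0..<n]) = ?pre @ ?post"
    using tu by (metis concat_append map_append less_imp_le_nat upt_add_eq_append zero_le
        le_add_diff_inverse)
  have "y \<in> set ?pre" using tu y by auto
  then obtain i where i: "i < length ?pre" "?pre ! i = y" by (metis in_set_conv_nth)
  have "\<not> j < length ?pre"
  proof
    assume "j < length ?pre"
    then have "x \<in> set ?pre" using j(2) split by (metis nth_append nth_mem)
    then obtain t' where "t' < u" "x \<in> set (f t')" by auto
    with only_u[of t'] tu show False by simp
  qed
  with i split show ?thesis by (intro exI[of _ i]) (auto simp: nth_append)
qed

lemma first_index:
  assumes "x \<in> set xs" "P x"
  obtains j where "j < length xs" "P (xs ! j)" "\<forall>i<j. \<not> P (xs ! i)"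
proof -
  obtain j0 where j0: "j0 < length xs" "P (xs ! j0)"
    using assms by (metis in_set_conv_nth)
  define j where "j = (LEAST j. j < length xs \<and> P (xs ! j))"
  have "j < length xs \<and> P (xs ! j)"
    unfolding j_def by (rule LeastI[of _ j0]) (use j0 in simp)
  moreover have "\<not> P (xs ! i)" if "i < j" for i
    using not_less_Least[OF that[unfolded j_def]] that calculation by auto
  ultimately show thesis using that by blast
qed

text \<open>If X precedes Y and the two strands meet at crossing k, then on the walk around
the circle of X from its basepoint, the preimage on Y (if met at all) comes after the
preimage on X: on that circle X is reached before Y.\<close>
lemma walk_meets_earlier_strand_first:
  assumes evX: "(k, s) \<in> set (events_from w 0 X)" and evY: "(k, \<not> s) \<in> set (events_from w 0 Y)"
    and XY: "precedes w X Y"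
    and j: "j < length (circle_walk w (mu w X))" "circle_walk w (mu w X) ! j = (k, \<not> s)"
  shows "\<exists>i<j. circle_walk w (mu w X) ! i = (k, s)"
proof -
  define a where "a = mu w X"
  let ?block = "\<lambda>t. events_from w 0 ((braid_perm w ^^ t) a)"
  obtain z where z: "z \<in> circle_of w a" "(k, \<not> s) \<in> set (events_from w 0 z)"
    using nth_mem[OF j(1)] j(2) unfolding a_def circle_walk_mem by metis
  have "z = Y" using events_from_strand_unique z(2) evY .
  then have muY: "mu w Y = a"
    using mu_eq[OF z(1)] unfolding a_def by simp
  have in_X_block: "(k, s) \<in> set (?block (walk_index w X))"
    using walk_index(2)[of w X] evX unfolding a_def by simp
  have XY_index: "walk_index w X < walk_index w Y"
    using XY muY unfolding precedes_def a_def by simp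
  have Y_index: "walk_index w Y < period w a"
    using walk_index(1)[of w Y] muY by simp
  have only_Y_block: "t' = walk_index w Y"
    if "t' < period w a" "(k, \<not> s) \<in> set (?block t')" for t'
  proof -
    have "(braid_perm w ^^ t') a = Y"
      using events_from_strand_unique that(2) evY .
    then show ?thesis using walk_index_unique[of t' w Y] that(1) muY by simp
  qed
  show ?thesis
    using concat_earlier_block[where f = ?block, OF XY_index Y_index in_X_block only_Y_block,
        where j = j] j
    unfolding a_def circle_walk_def by simp
qed

lemma walk_meets_crossing_first_on:
  assumes evX: "(k, s) \<in> set (events_from w 0 X)" and evY: "(k, \<not> s) \<in> set (events_from w 0 Y)"
    and XY: "precedes w X Y"
  obtains j where "j < length (circle_walk w (mu w X))" "circle_walk w (mu w X) ! j = (k, s)"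
    "\<forall>i<j. fst (circle_walk w (mu w X) ! i) \<noteq> k"
proof -
  have "X \<in> circle_of w (mu w X)"
    using circle_of_eq[OF mu_in_circle_of] circle_of_self by metis
  then have "(k, s) \<in> set (circle_walk w (mu w X))"
    using circle_walk_mem evX by blast
  then obtain j where j: "j < length (circle_walk w (mu w X))"
    "fst (circle_walk w (mu w X) ! j) = k" "\<forall>i<j. fst (circle_walk w (mu w X) ! i) \<noteq> k"
    using first_index[where P = "\<lambda>x. fst x = k"] by (metis fst_conv)
  have "circle_walk w (mu w X) ! j = (k, s)"
  proof (rule ccontr)
    assume "circle_walk w (mu w X) ! j \<noteq> (k, s)"
    then have "circle_walk w (mu w X) ! j = (k, \<not> s)"
      using j(2) by (cases "circle_walk w (mu w X) ! j") auto
    then show False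
      using walk_meets_earlier_strand_first[OF evX evY XY j(1)] j(3) by force
  qed
  then show thesis using that j by blast
qed

lemma crossing_head_on_earlier_strand:
  assumes v: "valid_braid m w" and ta: "totally_ascending m w"
    and X: "X \<in> {1..m}" and Y: "Y \<in> {1..m}"
    and evX: "(k, s) \<in> set (events_from w 0 X)" and evY: "(k, \<not> s) \<in> set (events_from w 0 Y)"
    and XY: "precedes w X Y"
  shows "s = head_side w k"
proof -
  obtain j where j: "j < length (circle_walk w (mu w X))" "circle_walk w (mu w X) ! j = (k, s)"
    "\<forall>i<j. fst (circle_walk w (mu w X) ! i) \<noteq> k"
    using walk_meets_crossing_first_on[OF evX evY XY] .
  have "Y \<in> circle_of w (mu w Y)"
    using circle_of_eq[OF mu_in_circle_of] circle_of_self by metis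
  then have "(k, \<not> s) \<in> set (circle_walk w (mu w Y))"
    using circle_walk_mem evY by blast
  moreover have "mu w X \<le> mu w Y"
    using XY unfolding precedes_def by auto
  ultimately have "let (k', s') = circle_walk w (mu w X) ! j in
      ((k', \<not> s') \<in> set (circle_walk w (mu w Y)) \<and>
       (\<forall>i<j. fst (circle_walk w (mu w X) ! i) \<noteq> k')) \<longrightarrow> s' = head_side w k'"
    using ta j(1) mu_in_circle_reps[OF v X] mu_in_circle_reps[OF v Y]
    unfolding totally_ascending_def by blast
  then show ?thesis
    using j(2,3) \<open>(k, \<not> s) \<in> set (circle_walk w (mu w Y))\<close> by simp
qed


section \<open>Counting ordered pairs of strands level by level\<close>

definition ordered_pairs :: "nat \<Rightarrow> letter list \<Rightarrow> nat \<Rightarrow> (nat \<times> nat) set" where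
  "ordered_pairs m w k =
     {(p, q) \<in> {1..m} \<times> {1..m}. precedes w p q \<and> strand_pos w k p < strand_pos w k q}"

lemma finite_ordered_pairs: "finite (ordered_pairs m w k)"
  unfolding ordered_pairs_def by (rule finite_subset[of _ "{1..m} \<times> {1..m}"]) auto

lemma card_difference_within:
  assumes "finite A" "finite B" "A - D = B - D"
  shows "int (card B) - int (card A) = int (card (B \<inter> D)) - int (card (A \<inter> D))"
  using card_Int_Diff[OF assms(1), of D] card_Int_Diff[OF assms(2), of D] assms(3) by simp

lemma step_less_step_iff:
  assumes "{a, b} \<noteq> {fst l, fst l + 1}"
  shows "step l a < step l b \<longleftrightarrow> a < b"
  using assms unfolding step_def by (auto simp: doubleton_eq_iff)

lemma crossing_strands:
  assumes v: "valid_braid m w" and k: "k < length w"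
  obtains P Q where "P \<in> {1..m}" "Q \<in> {1..m}"
    "strand_pos w k P = fst (w ! k)" "strand_pos w k Q = fst (w ! k) + 1"
proof -
  have "fst (w ! k) \<in> {1..m}" "fst (w ! k) + 1 \<in> {1..m}"
    using v nth_mem[OF k] unfolding valid_braid_def by auto
  then have P: "fst (w ! k) \<in> strand_pos w k ` {1..m}"
    and Q: "fst (w ! k) + 1 \<in> strand_pos w k ` {1..m}"
    using strand_pos_image[OF v, of k] by simp_all
  obtain P where "P \<in> {1..m}" "fst (w ! k) = strand_pos w k P"
    using P by (rule imageE)
  moreover obtain Q where "Q \<in> {1..m}" "fst (w ! k) + 1 = strand_pos w k Q"
    using Q by (rule imageE)
  ultimately show thesis
    using that by simp
qed

lemma ordered_pairs_off_crossing:
  assumes k: "k < length w"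
    and P: "strand_pos w k P = fst (w ! k)" and Q: "strand_pos w k Q = fst (w ! k) + 1"
  shows "ordered_pairs m w k - {(P, Q), (Q, P)} = ordered_pairs m w (Suc k) - {(P, Q), (Q, P)}"
proof -
  have "strand_pos w (Suc k) x < strand_pos w (Suc k) y \<longleftrightarrow> strand_pos w k x < strand_pos w k y"
    if "(x, y) \<notin> {(P, Q), (Q, P)}" for x y
  proof -
    have "{strand_pos w k x, strand_pos w k y} \<noteq> {fst (w ! k), fst (w ! k) + 1}"
    proof
      assume "{strand_pos w k x, strand_pos w k y} = {fst (w ! k), fst (w ! k) + 1}"
      then have "strand_pos w k x = strand_pos w k P \<and> strand_pos w k y = strand_pos w k Q \<or>
          strand_pos w k x = strand_pos w k Q \<and> strand_pos w k y = strand_pos w k P"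
        using P Q by (auto simp: doubleton_eq_iff)
      then have "(x, y) \<in> {(P, Q), (Q, P)}"
        using inj_strand_pos[of w k] by (auto simp: inj_eq)
      with that show False ..
    qed
    then show ?thesis by (simp add: strand_pos_Suc[OF k] step_less_step_iff)
  qed
  then show ?thesis unfolding ordered_pairs_def by auto
qed

text \<open>Crossing k changes the number of ordered pairs by its sign: it swaps the two
strands P, Q meeting there, and by total ascendancy the arrow head is on the earlier one.\<close>
lemma ordered_pairs_step:
  assumes v: "valid_braid m w" and ta: "totally_ascending m w" and k: "k < length w"
  shows "int (card (ordered_pairs m w (Suc k))) - int (card (ordered_pairs m w k)) = arrow_sign w k"
proof -
  obtain P Q where PQ: "P \<in> {1..m}" "Q \<in> {1..m}"
    and P: "strand_pos w k P = fst (w ! k)" and Q: "strand_pos w k Q = fst (w ! k) + 1"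
    using crossing_strands[OF v k] .
  have "P \<noteq> Q" using P Q by auto
  have P': "strand_pos w (Suc k) P = fst (w ! k) + 1" and Q': "strand_pos w (Suc k) Q = fst (w ! k)"
    using P Q by (simp_all add: strand_pos_Suc[OF k] step_def)
  have evP: "(k, True) \<in> set (events_from w 0 P)" and evQ: "(k, False) \<in> set (events_from w 0 Q)"
    using P Q k by (simp_all add: events_iff)
  define D where "D = {(P, Q), (Q, P)}"
  have change: "int (card (ordered_pairs m w (Suc k))) - int (card (ordered_pairs m w k)) =
      int (card (ordered_pairs m w (Suc k) \<inter> D)) - int (card (ordered_pairs m w k \<inter> D))"
    unfolding D_def
    by (intro card_difference_within finite_ordered_pairs ordered_pairs_off_crossing[OF k P Q])
  show ?thesis
  proof (cases "precedes w P Q")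
    case True
    then have "True = head_side w k"
      using crossing_head_on_earlier_strand[OF v ta PQ evP] evQ by simp
    moreover have "ordered_pairs m w (Suc k) \<inter> D = {}" "ordered_pairs m w k \<inter> D = {(P, Q)}"
      using True PQ P Q P' Q' precedes_asym by (auto simp: ordered_pairs_def D_def)
    ultimately show ?thesis
      using change by (simp add: head_side_def arrow_sign_def)
  next
    case False
    then have QP: "precedes w Q P" using precedes_total \<open>P \<noteq> Q\<close> by blast
    then have "False = head_side w k"
      using crossing_head_on_earlier_strand[OF v ta PQ(2,1)] evP evQ by simp
    moreover have "ordered_pairs m w (Suc k) \<inter> D = {(Q, P)}" "ordered_pairs m w k \<inter> D = {}"
      using False QP PQ P Q P' Q' by (auto simp: ordered_pairs_def D_def)
    ultimately show ?thesis
      using change by (simp add: head_side_def arrow_sign_def)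
  qed
qed

lemma writhe_ordered_pairs:
  assumes "valid_braid m w" "totally_ascending m w"
  shows "writhe w = int (card (ordered_pairs m w (length w))) - int (card (ordered_pairs m w 0))"
proof -
  have "writhe w = (\<Sum>k<length w.
      int (card (ordered_pairs m w (Suc k))) - int (card (ordered_pairs m w k)))"
    unfolding writhe_def using ordered_pairs_step[OF assms] by simp
  then show ?thesis
    using sum_lessThan_telescope[of "\<lambda>k. int (card (ordered_pairs m w k))" "length w"] by simp
qed


section \<open>Closing the braid\<close>

definition basepoint_pairs :: "nat \<Rightarrow> letter list \<Rightarrow> (nat \<times> nat) set" where
  "basepoint_pairs m w = {(mu w q, q) | q. q \<in> {1..m} \<and> mu w q \<noteq> q}"

lemma card_basepoint_pairs: "card (basepoint_pairs m w) = m - card (circle_reps m w)"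
proof -
  have "basepoint_pairs m w = (\<lambda>q. (mu w q, q)) ` ({1..m} - circle_reps m w)"
    unfolding basepoint_pairs_def circle_reps_def by auto
  moreover have "inj_on (\<lambda>q. (mu w q, q)) ({1..m} - circle_reps m w)"
    by (rule inj_onI) simp
  moreover have "circle_reps m w \<subseteq> {1..m}"
    unfolding circle_reps_def by auto
  ultimately show ?thesis
    by (simp add: card_image card_Diff_subset finite_subset)
qed

lemma ordered_pairs_closure:
  assumes v: "valid_braid m w"
  shows "ordered_pairs m w 0 =
           map_prod (braid_perm w) (braid_perm w) ` ordered_pairs m w (length w) \<union> basepoint_pairs m w"
    (is "?bottom = ?g ` ?top \<union> ?B")
proof (intro equalityI subsetI)
  fix z assume "z \<in> ?bottom"
  then obtain p' q' where z: "z = (p', q')" and pq': "p' \<in> {1..m}" "q' \<in> {1..m}"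
    and ord: "precedes w p' q'" "p' < q'"
    unfolding ordered_pairs_def by auto
  have "p' \<in> braid_perm w ` {1..m}" "q' \<in> braid_perm w ` {1..m}"
    using pq' braid_perm_image[OF v] by simp_all
  then obtain p q where p: "p \<in> {1..m}" "braid_perm w p = p'" and q: "q \<in> {1..m}" "braid_perm w q = q'"
    by blast
  have "precedes w p q \<or> (p' = mu w p \<and> mu w q = mu w p)"
    using precedes_braid_perm[of w p q] ord p q by simp
  then show "z \<in> ?g ` ?top \<union> ?B"
  proof
    assume "precedes w p q"
    then have "(p, q) \<in> ?top"
      using p q ord by (simp add: ordered_pairs_def strand_pos_length)
    then show ?thesis using z p q by force
  next
    assume "p' = mu w p \<and> mu w q = mu w p"
    then have "z = (mu w q', q')" "mu w q' \<noteq> q'"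
      using z p q ord by auto
    then show ?thesis using q(1) pq' unfolding basepoint_pairs_def by auto
  qed
next
  fix z assume "z \<in> ?g ` ?top \<union> ?B"
  then show "z \<in> ?bottom"
  proof
    assume "z \<in> ?g ` ?top"
    then obtain p q where z: "z = (braid_perm w p, braid_perm w q)" and "(p, q) \<in> ?top"
      by auto
    then show ?thesis
      using precedes_braid_perm[of w p q] braid_perm_image[OF v]
      by (auto simp: ordered_pairs_def strand_pos_length)
  next
    assume "z \<in> ?B"
    then obtain q where z: "z = (mu w q, q)" and q: "q \<in> {1..m}" "mu w q \<noteq> q"
      unfolding basepoint_pairs_def by auto
    have "walk_index w (mu w q) = 0" "walk_index w q \<noteq> 0"
      using walk_index_eq_0_iff q(2) by auto
    then have "precedes w (mu w q) q"
      unfolding precedes_def by simp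
    moreover have "mu w q < q"
      using mu_le_self[of w q] q(2) by simp
    ultimately show ?thesis
      using z q mu_range[OF v] by (simp add: ordered_pairs_def)
  qed
qed

text \<open>The union above is disjoint: a strand closing up to a basepoint precedes nothing
on its circle.\<close>
lemma basepoint_pairs_disjoint:
  "map_prod (braid_perm w) (braid_perm w) ` ordered_pairs m w (length w) \<inter> basepoint_pairs m w = {}"
proof -
  have False if "(p, q) \<in> ordered_pairs m w (length w)"
    and "braid_perm w p = mu w (braid_perm w q)" for p q
  proof -
    have "braid_perm w p = mu w p" "mu w q = mu w p"
      using that(2) mu_mu[of w "braid_perm w q"] by (metis mu_braid_perm)+
    then show False
      using closing_strand_last that(1) by (auto simp: ordered_pairs_def)
  qed
  then show ?thesis
    unfolding basepoint_pairs_def by fastforce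
qed

lemma num_circles_eq_card_reps:
  assumes v: "valid_braid m w"
  shows "num_circles m w = card (circle_reps m w)"
proof -
  have "circles m w = circle_of w ` circle_reps m w"
  proof
    show "circles m w \<subseteq> circle_of w ` circle_reps m w"
    proof
      fix C assume "C \<in> circles m w"
      then obtain p where p: "p \<in> {1..m}" "C = circle_of w p"
        unfolding circles_def by auto
      then have "C = circle_of w (mu w p)"
        using circle_of_eq[OF mu_in_circle_of] by metis
      then show "C \<in> circle_of w ` circle_reps m w"
        using mu_in_circle_reps[OF v p(1)] by blast
    qed
    show "circle_of w ` circle_reps m w \<subseteq> circles m w"
      unfolding circles_def circle_reps_def by auto
  qed
  moreover have "inj_on (circle_of w) (circle_reps m w)"
    by (rule inj_onI) (auto simp: circle_reps_def mu_def)
  ultimately show ?thesis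
    unfolding num_circles_def by (simp add: card_image)
qed

text \<open>Lemma 4.3: the top count is the bottom count minus the m - r basepoint pairs,
and the difference of the counts is the writhe.\<close>
theorem lemma4p3:
  fixes m :: nat and w :: "letter list"
  assumes "valid_braid m w"
    and "totally_ascending m w"
  shows "int (num_circles m w) = int m + writhe w"
proof -
  let ?top = "ordered_pairs m w (length w)" and ?g = "map_prod (braid_perm w) (braid_perm w)"
  have "inj (braid_perm w)"
    using permutation_braid_perm permutation_bijective bij_is_inj by blast
  then have card_top: "card (?g ` ?top) = card ?top"
    by (intro card_image inj_on_subset[OF prod.inj_map]) auto
  have "finite (basepoint_pairs m w)"
    using ordered_pairs_closure[OF assms(1)] finite_ordered_pairs[of m w 0] finite_Un by metis
  then have card_bottom: "card (ordered_pairs m w 0) = card ?top + card (basepoint_pairs m w)"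
    using ordered_pairs_closure[OF assms(1)] basepoint_pairs_disjoint[of w m] card_top
      card_Un_disjoint[of "?g ` ?top" "basepoint_pairs m w"] finite_ordered_pairs[of m w "length w"]
    by simp
  have "card (circle_reps m w) \<le> card {1..m}"
    by (rule card_mono) (auto simp: circle_reps_def)
  then show ?thesis
    using writhe_ordered_pairs[OF assms] card_bottom card_basepoint_pairs[of m w]
      num_circles_eq_card_reps[OF assms(1)] by simp
qed

end
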